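(* Let $q\ge2$ and $s\ge2$ be integers. There exists a constant $\lambda>0$ (depending only on $q,s$) such that for every $\eta>0$ there is a constant $C_\eta>0$ with the following property: for every $q$-multiplicative sequence $f\colon\mathbb{N}_0\to\mathbb{U}$ and all integers $N,M\ge1$ with $\eta M<N\le M/\eta$, $$\|f\|_{U^s[N]}\le C_\eta\,\|f\|_{U^s[M]}^{\lambda}.$$
   Context: $\mathbb{N}_0=\{0,1,2,\dots\}$, $\mathbb{U}=\{z\in\mathbb{C}:|z|=1\}$. A sequence $f\colon\mathbb{N}_0\to\mathbb{U}$ is $q$-multiplicative if for all integers $t,m,n\ge 0$ with $m<q^t$ and $q^t\mid n$ one has $f(m+n)=f(m)f(n)$. For $N\ge1$ let $[N]=\{0,\dots,N-1\}$ and let $\Pi(N)$ be the set of $\vec n=(n_0,\dots,n_s)\in\mathbb{Z}^{s+1}$ with $n_0+\omega_1n_1+\dots+\omega_sn_s\in[N]$ for all $\omega\in\{0,1\}^s$. The Gowers norm is defined by $\|f\|_{U^s[N]}^{2^s}=\frac{1}{|\Pi(N)|}\sum_{\vec n\in\Pi(N)}\prod_{\omega\in\{0,1\}^s}\mathcal{C}^{|\omega|}f(n_0+\omega_1n_1+\dots+\omega_sn_s)$, $\|f\|_{U^s[N]}\ge0$, where $\mathcal{C}$ is complex conjugation and $|\omega|=\sum_i\omega_i$. *)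

theory Defs
  imports Complex_Main "HOL-Library.FuncSet"
begin

text \<open>q-multiplicative sequences (values in the unit circle are required separately).\<close>
definition q_multiplicative :: "nat \<Rightarrow> (nat \<Rightarrow> complex) \<Rightarrow> bool" where
  "q_multiplicative q f \<longleftrightarrow>
     (\<forall>t m n. m < q ^ t \<and> q ^ t dvd n \<longrightarrow> f (m + n) = f m * f n)"

text \<open>Vectors (n_0,...,n_s) are functions on {0..s}; omega in {0,1}^s is encoded by
  the subset S of {1..s} where omega_i = 1, so |omega| = card S.\<close>
definition gowers_Pi :: "nat \<Rightarrow> nat \<Rightarrow> (nat \<Rightarrow> int) set" where
  "gowers_Pi s N = {n \<in> {0..s} \<rightarrow>\<^sub>E (UNIV :: int set).
       \<forall>S \<subseteq> {1..s}. n 0 + (\<Sum>i\<in>S. n i) \<in> {0..<int N}}"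

definition conj_pow :: "nat \<Rightarrow> complex \<Rightarrow> complex" where
  "conj_pow k z = (if even k then z else cnj z)"

definition gowers_pow :: "nat \<Rightarrow> nat \<Rightarrow> (nat \<Rightarrow> complex) \<Rightarrow> complex" where
  "gowers_pow s N f =
     (1 / of_nat (card (gowers_Pi s N))) *
     (\<Sum>n\<in>gowers_Pi s N. \<Prod>S\<in>Pow {1..s}. conj_pow (card S) (f (nat (n 0 + (\<Sum>i\<in>S. n i)))))"

text \<open>The Gowers norm: the nonnegative 2^s-th root of the (real, nonnegative) average.\<close>
definition gowers_norm :: "nat \<Rightarrow> nat \<Rightarrow> (nat \<Rightarrow> complex) \<Rightarrow> real" where
  "gowers_norm s N f = root (2 ^ s) (cmod (gowers_pow s N f))"

end

theory Submission
  imports Defs "HOL-Analysis.Analysis"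
begin

text \<open>
  All Gowers sums below are unnormalised sums over the product box [0,R) x (-R,R)^s, for functions
  on the integers vanishing outside [0,R); the box contains every parallelepiped with vertices in
  [0,R) and makes induction on s possible. Cauchy-Schwarz and Hoelder give the Gowers-Cauchy-Schwarz
  inequality, hence the triangle inequality for the unnormalised norm, which is also invariant under
  translations, unimodular factors and, for s \<ge> 2, linear phases.

  Cut [0,N) into blocks of length q^k, where q^k \<le> M < q^(k+1). By q-multiplicativity, f on a block
  is a unimodular multiple of a translate of f restricted to an initial segment [0,L) with L \<le> M.
  To pass from [0,M) to [0,L), multiply by the convolution of the indicator of [0,L) with a
  normalised interval of length K: it is a trigonometric polynomial whose coefficients have l1-norm
  at most sqrt(L/K), so it costs a factor sqrt(M/K), and the remaining error lives on 2K points and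
  contributes (2 K M^s)^(1/2^s). The diagonal terms alone show that the U^s[M]-norm x satisfies
  2^s M x \<ge> 1, so K close to x M is admissible and gives the estimate with exponent 1/2^s.
\<close>

section \<open>Unnormalised Gowers sums over a box\<close>

lemma conj_pow_Suc: "conj_pow (Suc k) a = cnj (conj_pow k a)"
  by (simp add: conj_pow_def)

lemma conj_pow_mult: "conj_pow k (a * b) = conj_pow k a * conj_pow k b"
  by (simp add: conj_pow_def)

lemma conj_pow_add: "conj_pow k (a + b) = conj_pow k a + conj_pow k b"
  by (simp add: conj_pow_def)

lemma conj_pow_cnj: "conj_pow k (cnj a) = cnj (conj_pow k a)"
  by (simp add: conj_pow_def)

lemma conj_pow_eq_0_iff [simp]: "conj_pow k a = 0 \<longleftrightarrow> a = 0"
  by (simp add: conj_pow_def)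

lemma norm_conj_pow [simp]: "cmod (conj_pow k a) = cmod a"
  by (simp add: conj_pow_def)

lemma prod_Pow_insert:
  fixes F :: "'a set \<Rightarrow> 'b::comm_monoid_mult"
  assumes "finite A" "a \<notin> A"
  shows "(\<Prod>S\<in>Pow (insert a A). F S) = (\<Prod>S\<in>Pow A. F S * F (insert a S))"
proof -
  have inj: "inj_on (insert a) (Pow A)"
    using assms(2) by (intro inj_onI) (metis PowD insert_ident subsetD)
  have "(\<Prod>S\<in>Pow (insert a A). F S) = (\<Prod>S\<in>Pow A. F S) * (\<Prod>S\<in>insert a ` Pow A. F S)"
    unfolding Pow_insert using assms by (intro prod.union_disjoint) auto
  also have "(\<Prod>S\<in>insert a ` Pow A. F S) = (\<Prod>S\<in>Pow A. F (insert a S))"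
    using prod.reindex[OF inj] by simp
  finally show ?thesis
    by (simp add: prod.distrib)
qed

lemma prod_Pow_Suc:
  "(\<Prod>S\<in>Pow {1..Suc s}. F S) = (\<Prod>S\<in>Pow {1..s}. F S * F (insert (Suc s) S))"
  using prod_Pow_insert[of "{1..s}" "Suc s" F] by (simp add: atLeastAtMostSuc_conv)

lemma card_insert_Suc: "S \<in> Pow {1..s} \<Longrightarrow> card (insert (Suc s) S) = Suc (card S)"
  using finite_subset[of S "{1..s}"] by (subst card_insert_disjoint) auto

lemma prod_conj_pow_unimodular:
  assumes "cmod c = 1"
  shows "(\<Prod>S\<in>Pow {1..Suc s}. conj_pow (card S) c) = 1"
proof -
  have "conj_pow k c * cnj (conj_pow k c) = 1" for k
    using assms by (simp add: complex_norm_square[symmetric])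
  then show ?thesis
    unfolding prod_Pow_Suc by (simp add: card_insert_Suc conj_pow_Suc)
qed

definition gowers_box :: "nat \<Rightarrow> int \<Rightarrow> (nat \<Rightarrow> int) set" where
  "gowers_box s R = PiE {0..s} (\<lambda>i. if i = 0 then {0..<R} else {-R<..<R})"

definition cube_vertex :: "(nat \<Rightarrow> int) \<Rightarrow> nat set \<Rightarrow> int" where
  "cube_vertex n S = n 0 + (\<Sum>i\<in>S. n i)"

definition gowers_inner :: "nat \<Rightarrow> int \<Rightarrow> (nat set \<Rightarrow> int \<Rightarrow> complex) \<Rightarrow> complex" where
  "gowers_inner s R g =
     (\<Sum>n\<in>gowers_box s R. \<Prod>S\<in>Pow {1..s}. conj_pow (card S) (g S (cube_vertex n S)))"

definition gowers_sum :: "nat \<Rightarrow> int \<Rightarrow> (int \<Rightarrow> complex) \<Rightarrow> complex" where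
  "gowers_sum s R w = gowers_inner s R (\<lambda>_. w)"

lemma finite_gowers_box [simp]: "finite (gowers_box s R)"
  unfolding gowers_box_def by (intro finite_PiE) auto

lemma sum_gowers_box_Suc:
  "(\<Sum>n\<in>gowers_box (Suc s) R. F n) = (\<Sum>n\<in>gowers_box s R. \<Sum>t\<in>{-R<..<R}. F (n(Suc s := t)))"
proof -
  let ?B = "\<lambda>i. if i = 0 then {0..<R} else {-R<..<R}"
  have box: "gowers_box (Suc s) R = (\<lambda>(t, n). n(Suc s := t)) ` ({-R<..<R} \<times> gowers_box s R)"
    unfolding gowers_box_def by (simp add: atLeastAtMostSuc_conv PiE_insert_eq)
  have inj: "inj_on (\<lambda>(t, n). n(Suc s := t)) ({-R<..<R} \<times> gowers_box s R)"
    using inj_combinator[of "Suc s" "{0..s}" ?B] unfolding gowers_box_def by simp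
  show ?thesis
    unfolding box sum.reindex[OF inj] sum.cartesian_product' by (subst sum.swap) simp
qed

lemma cube_vertex_upd:
  assumes "S \<subseteq> {1..s}"
  shows "cube_vertex (n(Suc s := t)) S = cube_vertex n S"
    and "cube_vertex (n(Suc s := t)) (insert (Suc s) S) = cube_vertex n S + t"
proof -
  have "finite S" "Suc s \<notin> S"
    using assms finite_subset by auto
  moreover have "(\<Sum>i\<in>S. (n(Suc s := t)) i) = (\<Sum>i\<in>S. n i)"
    using \<open>Suc s \<notin> S\<close> by (intro sum.cong) auto
  ultimately show "cube_vertex (n(Suc s := t)) S = cube_vertex n S"
    and "cube_vertex (n(Suc s := t)) (insert (Suc s) S) = cube_vertex n S + t"
    unfolding cube_vertex_def by simp_all
qed

lemma gowers_inner_Suc: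
  "gowers_inner (Suc s) R g =
     (\<Sum>t\<in>{-R<..<R}. gowers_inner s R (\<lambda>S y. g S y * cnj (g (insert (Suc s) S) (y + t))))"
proof -
  have "(\<Prod>S\<in>Pow {1..Suc s}. conj_pow (card S) (g S (cube_vertex (n(Suc s := t)) S))) =
        (\<Prod>S\<in>Pow {1..s}. conj_pow (card S)
           (g S (cube_vertex n S) * cnj (g (insert (Suc s) S) (cube_vertex n S + t))))" for n t
    unfolding prod_Pow_Suc
    by (intro prod.cong refl)
       (simp add: cube_vertex_upd card_insert_Suc conj_pow_mult conj_pow_Suc conj_pow_cnj)
  then show ?thesis
    unfolding gowers_inner_def sum_gowers_box_Suc by (subst sum.swap) simp
qed

lemma gowers_inner_cong:
  "(\<And>S. S \<subseteq> {1..s} \<Longrightarrow> g S = g' S) \<Longrightarrow> gowers_inner s R g = gowers_inner s R g'"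
  unfolding gowers_inner_def by (intro sum.cong prod.cong refl) auto

lemma gowers_inner_pair_eq_sum:
  "gowers_inner (Suc s) R (\<lambda>S. if Suc s \<in> S then v else u) =
     (\<Sum>t\<in>{-R<..<R}. gowers_sum s R (\<lambda>y. u y * cnj (v (y + t))))"
  unfolding gowers_inner_Suc gowers_sum_def by (intro sum.cong refl gowers_inner_cong) auto

lemma gowers_sum_Suc_eq_sum:
  "gowers_sum (Suc s) R u = (\<Sum>t\<in>{-R<..<R}. gowers_sum s R (\<lambda>y. u y * cnj (u (y + t))))"
  using gowers_inner_pair_eq_sum[of s R u u] by (simp add: gowers_sum_def)

section \<open>The Gowers-Cauchy-Schwarz inequality\<close>

definition vanishes_outside :: "int \<Rightarrow> (int \<Rightarrow> complex) \<Rightarrow> bool" where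
  "vanishes_outside R w \<longleftrightarrow> (\<forall>y. w y \<noteq> 0 \<longrightarrow> 0 \<le> y \<and> y < R)"

lemma sum_shift_eq:
  fixes G :: "int \<Rightarrow> 'a::comm_monoid_add"
  assumes "finite A" "finite B" "\<And>y. G y \<noteq> 0 \<Longrightarrow> y - a \<in> A \<longleftrightarrow> y \<in> B"
  shows "(\<Sum>x\<in>A. G (x + a)) = (\<Sum>y\<in>B. G y)"
proof -
  have "(\<Sum>x\<in>A. G (x + a)) = (\<Sum>y\<in>(\<lambda>x. x + a) ` A. G y)"
    by (simp add: sum.reindex inj_on_def)
  also have "\<dots> = (\<Sum>y\<in>B. G y)"
    using assms by (intro sum.mono_neutral_cong) force+
  finally show ?thesis .
qed

lemma vanishes_outside_mult_left: "vanishes_outside R w \<Longrightarrow> vanishes_outside R (\<lambda>y. c y * w y)"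
  unfolding vanishes_outside_def by auto

lemma vanishes_outside_sum:
  "(\<And>j. j \<in> J \<Longrightarrow> vanishes_outside R (F j)) \<Longrightarrow> vanishes_outside R (\<lambda>y. \<Sum>j\<in>J. F j y)"
  unfolding vanishes_outside_def by (metis (mono_tags, lifting) sum.neutral)

definition diff_box :: "nat \<Rightarrow> int \<Rightarrow> (nat \<Rightarrow> int) set" where
  "diff_box s R = PiE {1..s} (\<lambda>_. {-R<..<R})"

definition cube_prod :: "nat \<Rightarrow> (int \<Rightarrow> complex) \<Rightarrow> (nat \<Rightarrow> int) \<Rightarrow> int \<Rightarrow> complex" where
  "cube_prod s w h x = (\<Prod>S\<in>Pow {1..s}. conj_pow (card S) (w (x + (\<Sum>i\<in>S. h i))))"

definition cube_sum :: "nat \<Rightarrow> int \<Rightarrow> (int \<Rightarrow> complex) \<Rightarrow> (nat \<Rightarrow> int) \<Rightarrow> complex" where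
  "cube_sum s R w h = (\<Sum>x\<in>{0..<R}. cube_prod s w h x)"

lemma finite_diff_box [simp]: "finite (diff_box s R)"
  unfolding diff_box_def by (intro finite_PiE) auto

lemma cube_prod_eq_0: "w x = 0 \<Longrightarrow> cube_prod s w h x = 0"
  unfolding cube_prod_def by (intro prod_zero bexI[of _ "{}"]) auto

lemma sum_gowers_box:
  "(\<Sum>n\<in>gowers_box s R. F n) = (\<Sum>h\<in>diff_box s R. \<Sum>x\<in>{0..<R}. F (h(0 := x)))"
proof -
  let ?B = "\<lambda>i. if i = 0 then {0..<R} else {-R<..<R}"
  have diff: "PiE {1..s} ?B = diff_box s R"
    unfolding diff_box_def by (rule PiE_cong) auto
  have "{0..s} = insert 0 {1..s}"
    by auto
  then have box: "gowers_box s R = (\<lambda>(x, h). h(0 := x)) ` ({0..<R} \<times> diff_box s R)"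
    unfolding gowers_box_def by (simp only: PiE_insert_eq diff) simp
  have inj: "inj_on (\<lambda>(x, h). h(0 := x)) ({0..<R} \<times> diff_box s R)"
    using inj_combinator[of 0 "{1..s}" ?B] unfolding diff by simp
  show ?thesis
    unfolding box sum.reindex[OF inj] sum.cartesian_product' by (subst sum.swap) simp
qed

lemma gowers_inner_diff_box:
  "gowers_inner s R g =
     (\<Sum>h\<in>diff_box s R. \<Sum>x\<in>{0..<R}. \<Prod>S\<in>Pow {1..s}. conj_pow (card S) (g S (x + (\<Sum>i\<in>S. h i))))"
  unfolding gowers_inner_def sum_gowers_box cube_vertex_def
  by (intro sum.cong prod.cong refl arg_cong[where f="\<lambda>y. conj_pow _ (g _ y)"]) (auto intro!: sum.cong)

lemma gowers_sum_diff_box: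
  "gowers_sum s R w = (\<Sum>h\<in>diff_box s R. \<Sum>x\<in>{0..<R}. cube_prod s w h x)"
  unfolding gowers_sum_def gowers_inner_diff_box cube_prod_def ..

lemma gowers_inner_pair:
  assumes "vanishes_outside R v"
  shows "gowers_inner (Suc s) R (\<lambda>S. if Suc s \<in> S then v else u) =
    (\<Sum>h\<in>diff_box s R. cube_sum s R u h * cnj (cube_sum s R v h))"
proof -
  have shift: "(\<Sum>t\<in>{-R<..<R}. cube_prod s v h (t + x)) = cube_sum s R v h"
    if "x \<in> {0..<R}" for h x
    unfolding cube_sum_def
  proof (rule sum_shift_eq)
    fix y assume "cube_prod s v h y \<noteq> 0"
    then have "0 \<le> y \<and> y < R"
      using assms cube_prod_eq_0 unfolding vanishes_outside_def by blast
    then show "y - x \<in> {-R<..<R} \<longleftrightarrow> y \<in> {0..<R}"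
      using that by auto
  qed auto
  have "gowers_inner (Suc s) R (\<lambda>S. if Suc s \<in> S then v else u) =
      (\<Sum>t\<in>{-R<..<R}. \<Sum>h\<in>diff_box s R. \<Sum>x\<in>{0..<R}.
        cube_prod s u h x * cnj (cube_prod s v h (t + x)))"
    unfolding gowers_inner_pair_eq_sum gowers_sum_diff_box cube_prod_def
    by (simp add: conj_pow_mult conj_pow_cnj prod.distrib ac_simps)
  also have "\<dots> = (\<Sum>h\<in>diff_box s R. \<Sum>x\<in>{0..<R}.
      cube_prod s u h x * cnj (\<Sum>t\<in>{-R<..<R}. cube_prod s v h (t + x)))"
    unfolding cnj_sum sum_distrib_left by (subst sum.swap) (rule sum.cong[OF refl], rule sum.swap)
  also have "\<dots> = (\<Sum>h\<in>diff_box s R. cube_sum s R u h * cnj (cube_sum s R v h))"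
    by (simp add: shift cube_sum_def sum_distrib_right)
  finally show ?thesis .
qed

lemma gowers_sum_Suc:
  assumes "vanishes_outside R u"
  shows "gowers_sum (Suc s) R u = of_real (\<Sum>h\<in>diff_box s R. (cmod (cube_sum s R u h))\<^sup>2)"
  unfolding gowers_sum_def gowers_inner_pair[OF assms, of s u, simplified] of_real_sum complex_norm_square ..

lemma norm_gowers_sum_Suc:
  assumes "vanishes_outside R u"
  shows "cmod (gowers_sum (Suc s) R u) = (\<Sum>h\<in>diff_box s R. (cmod (cube_sum s R u h))\<^sup>2)"
  unfolding gowers_sum_Suc[OF assms] norm_of_real by (simp add: sum_nonneg)

lemma norm_gowers_inner_pair_le:
  assumes "vanishes_outside R u" "vanishes_outside R v"
  shows "cmod (gowers_inner (Suc s) R (\<lambda>S. if Suc s \<in> S then v else u))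
    \<le> sqrt (cmod (gowers_sum (Suc s) R u)) * sqrt (cmod (gowers_sum (Suc s) R v))"
proof -
  let ?a = "\<lambda>w h. cmod (cube_sum s R w h)"
  have "cmod (gowers_inner (Suc s) R (\<lambda>S. if Suc s \<in> S then v else u))
      \<le> (\<Sum>h\<in>diff_box s R. \<bar>?a u h\<bar> * \<bar>?a v h\<bar>)"
    unfolding gowers_inner_pair[OF assms(2)] by (rule order_trans[OF norm_sum]) (simp add: norm_mult)
  also have "\<dots> \<le> L2_set (?a u) (diff_box s R) * L2_set (?a v) (diff_box s R)"
    by (rule L2_set_mult_ineq)
  finally show ?thesis
    by (simp add: L2_set_def norm_gowers_sum_Suc assms)
qed

lemma sum_geom_mean_le_geom_mean_sum:
  fixes a :: "'i \<Rightarrow> 't \<Rightarrow> real"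
  assumes I: "finite I" "I \<noteq> {}" and J: "finite J" and nonneg: "\<And>i t. a i t \<ge> 0"
  shows "(\<Sum>t\<in>J. (\<Prod>i\<in>I. a i t) powr (1 / card I)) \<le> (\<Prod>i\<in>I. (\<Sum>t\<in>J. a i t) powr (1 / card I))"
proof (cases "\<exists>i\<in>I. (\<Sum>t\<in>J. a i t) = 0")
  case True
  then obtain i where "i \<in> I" "\<forall>t\<in>J. a i t = 0"
    using sum_nonneg_eq_0_iff[OF J] nonneg by blast
  then have "(\<Prod>i\<in>I. a i t) = 0" if "t \<in> J" for t
    using that I by (intro prod_zero) auto
  then show ?thesis
    by (simp add: prod_nonneg)
next
  case False
  define A where "A i = (\<Sum>t\<in>J. a i t)" for i
  have A: "A i > 0" if "i \<in> I" for i
    using False that nonneg unfolding A_def by (metis less_eq_real_def sum_nonneg)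
  \<comment> \<open>normalise every row to total mass one and apply AM-GM in each column\<close>
  have "(\<Prod>i\<in>I. a i t) = (\<Prod>i\<in>I. A i) * (\<Prod>i\<in>I. a i t / A i)" for t
    unfolding prod.distrib[symmetric] by (intro prod.cong refl) (use A in force)
  then have "(\<Prod>i\<in>I. a i t) powr (1 / card I)
      = (\<Prod>i\<in>I. A i) powr (1 / card I) * (\<Prod>i\<in>I. a i t / A i) powr (1 / card I)" for t
    using A nonneg by (simp add: powr_mult prod_nonneg less_imp_le)
  also have "\<dots> t \<le> (\<Prod>i\<in>I. A i) powr (1 / card I) * (\<Sum>i\<in>I. a i t / A i / card I)" for t
    using A nonneg by (intro mult_left_mono arith_geom_mean I) (auto intro: divide_nonneg_pos)
  finally have "(\<Sum>t\<in>J. (\<Prod>i\<in>I. a i t) powr (1 / card I))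
      \<le> (\<Prod>i\<in>I. A i) powr (1 / card I) * (\<Sum>i\<in>I. (\<Sum>t\<in>J. a i t) / A i / card I)"
    by (rule order_trans[OF sum_mono]) (simp add: sum_distrib_left sum_divide_distrib sum.swap[of _ J])
  also have "(\<Sum>i\<in>I. (\<Sum>t\<in>J. a i t) / A i / card I) = (\<Sum>i\<in>I. 1 / card I)"
    using A by (intro sum.cong refl) (simp add: A_def less_imp_neq[symmetric])
  also have "\<dots> = 1"
    using I by simp
  finally show ?thesis
    by (simp add: prod_powr_distrib A_def)
qed

definition box_norm :: "nat \<Rightarrow> int \<Rightarrow> (int \<Rightarrow> complex) \<Rightarrow> real" where
  "box_norm s R w = cmod (gowers_sum s R w) powr (1 / 2 ^ s)"

lemma box_norm_nonneg: "box_norm s R w \<ge> 0"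
  unfolding box_norm_def by simp

lemma gowers_sum_Suc_real:
  assumes "vanishes_outside R u"
  shows "gowers_sum (Suc s) R u = of_real (cmod (gowers_sum (Suc s) R u))"
  unfolding norm_gowers_sum_Suc[OF assms] by (rule gowers_sum_Suc[OF assms])

lemma sum_norm_gowers_sum_le:
  assumes "vanishes_outside R u" "vanishes_outside R v"
  shows "(\<Sum>t\<in>{-R<..<R}. cmod (gowers_sum (Suc s) R (\<lambda>y. u y * cnj (v (y + t)))))
    \<le> sqrt (cmod (gowers_sum (Suc (Suc s)) R u)) * sqrt (cmod (gowers_sum (Suc (Suc s)) R v))"
proof -
  define r where "r t = cmod (gowers_sum (Suc s) R (\<lambda>y. u y * cnj (v (y + t))))" for t
  have "vanishes_outside R (\<lambda>y. u y * cnj (v (y + t)))" for t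
    using assms(1) by (auto simp: vanishes_outside_def)
  \<comment> \<open>Gowers sums of dimension at least one are nonnegative reals\<close>
  then have real: "gowers_sum (Suc s) R (\<lambda>y. u y * cnj (v (y + t))) = of_real (r t)" for t
    unfolding r_def by (rule gowers_sum_Suc_real)
  have "(\<Sum>t\<in>{-R<..<R}. r t) = cmod (\<Sum>t\<in>{-R<..<R}. gowers_sum (Suc s) R (\<lambda>y. u y * cnj (v (y + t))))"
    unfolding real of_real_sum[symmetric] norm_of_real by (simp add: r_def sum_nonneg)
  also have "\<dots> = cmod (gowers_inner (Suc (Suc s)) R (\<lambda>S. if Suc (Suc s) \<in> S then v else u))"
    unfolding gowers_inner_pair_eq_sum ..
  also have "\<dots> \<le> sqrt (cmod (gowers_sum (Suc (Suc s)) R u)) * sqrt (cmod (gowers_sum (Suc (Suc s)) R v))"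
    by (rule norm_gowers_inner_pair_le[OF assms])
  finally show ?thesis
    unfolding r_def .
qed

theorem norm_gowers_inner_le_prod_box_norm:
  assumes "\<And>S. vanishes_outside R (g S)"
  shows "cmod (gowers_inner (Suc s) R g) \<le> (\<Prod>S\<in>Pow {1..Suc s}. box_norm (Suc s) R (g S))"
  using assms
proof (induction s arbitrary: g)
  case 0
  have "gowers_inner (Suc 0) R g = gowers_inner (Suc 0) R (\<lambda>S. if Suc 0 \<in> S then g {Suc 0} else g {})"
    by (rule gowers_inner_cong) (auto simp: subset_singleton_iff)
  also have "cmod \<dots> \<le> sqrt (cmod (gowers_sum (Suc 0) R (g {}))) * sqrt (cmod (gowers_sum (Suc 0) R (g {Suc 0})))"
    by (rule norm_gowers_inner_pair_le) (use 0 in auto)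
  also have "\<dots> = (\<Prod>S\<in>Pow {1..Suc 0}. box_norm (Suc 0) R (g S))"
    unfolding prod_Pow_Suc by (simp add: box_norm_def powr_half_sqrt)
  finally show ?case .
next
  case (Suc s)
  let ?P = "Pow {1..Suc s}" and ?I = "insert (Suc (Suc s))"
  define w where "w t S = (\<lambda>y. g S y * cnj (g (?I S) (y + t)))" for t S
  have "cmod (gowers_inner (Suc (Suc s)) R g) \<le> (\<Sum>t\<in>{-R<..<R}. cmod (gowers_inner (Suc s) R (w t)))"
    unfolding gowers_inner_Suc[of "Suc s"] w_def by (rule norm_sum)
  also have "\<dots> \<le> (\<Sum>t\<in>{-R<..<R}. \<Prod>S\<in>?P. box_norm (Suc s) R (w t S))"
    using Suc.prems by (intro sum_mono Suc.IH) (auto simp: w_def vanishes_outside_def)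
  also have "\<dots> = (\<Sum>t\<in>{-R<..<R}. (\<Prod>S\<in>?P. cmod (gowers_sum (Suc s) R (w t S))) powr (1 / card ?P))"
    by (simp add: box_norm_def prod_powr_distrib card_Pow)
  also have "\<dots> \<le> (\<Prod>S\<in>?P. (\<Sum>t\<in>{-R<..<R}. cmod (gowers_sum (Suc s) R (w t S))) powr (1 / card ?P))"
    by (rule sum_geom_mean_le_geom_mean_sum) auto
  also have "\<dots> \<le> (\<Prod>S\<in>?P. (sqrt (cmod (gowers_sum (Suc (Suc s)) R (g S)))
      * sqrt (cmod (gowers_sum (Suc (Suc s)) R (g (?I S))))) powr (1 / card ?P))"
    unfolding w_def using Suc.prems
    by (intro prod_mono conjI powr_mono2 sum_norm_gowers_sum_le) (auto simp: sum_nonneg)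
  also have "\<dots> = (\<Prod>S\<in>?P. box_norm (Suc (Suc s)) R (g S) * box_norm (Suc (Suc s)) R (g (?I S)))"
    by (simp add: card_Pow box_norm_def powr_mult powr_half_sqrt[symmetric] powr_powr)
  also have "\<dots> = (\<Prod>S\<in>Pow {1..Suc (Suc s)}. box_norm (Suc (Suc s)) R (g S))"
    by (rule prod_Pow_Suc[symmetric])
  finally show ?case .
qed

section \<open>Triangle inequality and invariances of the box norm\<close>

lemma prod_if_mem:
  assumes "finite A" "X \<subseteq> A"
  shows "(\<Prod>S\<in>A. if S \<in> X then f S else g S) = prod f X * prod g (A - X)"
proof -
  have "A \<inter> {S. S \<in> X} = X" "A \<inter> - {S. S \<in> X} = A - X"
    using assms(2) by auto
  then show ?thesis
    using prod.If_cases[OF assms(1), of "\<lambda>S. S \<in> X" f g] by simp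
qed

lemma gowers_sum_add:
  "gowers_sum s R (\<lambda>y. u y + v y) =
     (\<Sum>X\<in>Pow (Pow {1..s}). gowers_inner s R (\<lambda>S. if S \<in> X then u else v))"
proof -
  have "gowers_sum s R (\<lambda>y. u y + v y) = (\<Sum>n\<in>gowers_box s R. \<Sum>X\<in>Pow (Pow {1..s}).
      (\<Prod>S\<in>X. conj_pow (card S) (u (cube_vertex n S))) *
      (\<Prod>S\<in>Pow {1..s} - X. conj_pow (card S) (v (cube_vertex n S))))"
    unfolding gowers_sum_def gowers_inner_def conj_pow_add by (intro sum.cong refl prod_add) simp
  also have "\<dots> = (\<Sum>X\<in>Pow (Pow {1..s}). gowers_inner s R (\<lambda>S. if S \<in> X then u else v))"
    unfolding gowers_inner_def by (subst sum.swap) (simp add: if_distrib[of "\<lambda>w. conj_pow _ (w _)"] prod_if_mem)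
  finally show ?thesis .
qed

lemma power_powr_inverse: "0 \<le> (x::real) \<Longrightarrow> n \<noteq> 0 \<Longrightarrow> (x ^ n) powr (1 / n) = x"
  by (simp add: powr_realpow'[symmetric] powr_powr)

lemma box_norm_add_le:
  assumes "vanishes_outside R u" "vanishes_outside R v"
  shows "box_norm (Suc s) R (\<lambda>y. u y + v y) \<le> box_norm (Suc s) R u + box_norm (Suc s) R v"
proof -
  let ?P = "Pow {1..Suc s}" and ?a = "box_norm (Suc s) R u" and ?b = "box_norm (Suc s) R v"
  have "cmod (gowers_sum (Suc s) R (\<lambda>y. u y + v y))
      \<le> (\<Sum>X\<in>Pow ?P. cmod (gowers_inner (Suc s) R (\<lambda>S. if S \<in> X then u else v)))"
    unfolding gowers_sum_add by (rule norm_sum)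
  also have "\<dots> \<le> (\<Sum>X\<in>Pow ?P. \<Prod>S\<in>?P. if S \<in> X then ?a else ?b)"
    using assms by (intro sum_mono order_trans[OF norm_gowers_inner_le_prod_box_norm]) (auto simp: if_distrib[of "box_norm (Suc s) R"])
  also have "\<dots> = (\<Sum>X\<in>Pow ?P. (\<Prod>S\<in>X. ?a) * (\<Prod>S\<in>?P - X. ?b))"
    by (intro sum.cong refl prod_if_mem) auto
  also have "\<dots> = (\<Prod>S\<in>?P. ?a + ?b)"
    by (rule prod_add[symmetric]) simp
  also have "\<dots> = (?a + ?b) ^ 2 ^ Suc s"
    by (simp add: card_Pow)
  finally have "box_norm (Suc s) R (\<lambda>y. u y + v y) \<le> ((?a + ?b) ^ 2 ^ Suc s) powr (1 / 2 ^ Suc s)"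
    unfolding box_norm_def by (rule powr_mono2[rotated 2]) auto
  also have "\<dots> = ?a + ?b"
    using power_powr_inverse[of "box_norm (Suc s) R u + box_norm (Suc s) R v" "2 ^ Suc s"]
    by (simp add: box_norm_nonneg)
  finally show ?thesis .
qed

lemma box_norm_zero: "box_norm s R (\<lambda>_. 0) = 0"
  unfolding box_norm_def gowers_sum_def gowers_inner_def
  by (simp add: card_Pow) blast

lemma box_norm_sum_le:
  assumes "finite J" "\<And>j. j \<in> J \<Longrightarrow> vanishes_outside R (F j)"
  shows "box_norm (Suc s) R (\<lambda>y. \<Sum>j\<in>J. F j y) \<le> (\<Sum>j\<in>J. box_norm (Suc s) R (F j))"
  using assms
proof (induction J rule: finite_induct)
  case empty
  then show ?case
    by (simp add: box_norm_zero)
next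
  case (insert j J)
  then have "box_norm (Suc s) R (\<lambda>y. \<Sum>j\<in>insert j J. F j y)
      \<le> box_norm (Suc s) R (F j) + box_norm (Suc s) R (\<lambda>y. \<Sum>j\<in>J. F j y)"
    by (simp add: box_norm_add_le vanishes_outside_sum)
  then show ?case
    using insert by simp
qed

lemma gowers_inner_scale:
  "gowers_inner s R (\<lambda>S y. c * w S y) = (\<Prod>S\<in>Pow {1..s}. conj_pow (card S) c) * gowers_inner s R w"
  unfolding gowers_inner_def by (simp add: conj_pow_mult prod.distrib sum_distrib_left)

lemma box_norm_scale: "box_norm s R (\<lambda>y. c * w y) = cmod c * box_norm s R w"
proof -
  have "cmod (gowers_sum s R (\<lambda>y. c * w y)) = cmod c ^ 2 ^ s * cmod (gowers_sum s R w)"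
    unfolding gowers_sum_def gowers_inner_scale
    by (simp add: norm_mult prod_norm[symmetric] card_Pow)
  then show ?thesis
    using power_powr_inverse[of "cmod c" "2 ^ s"] by (simp add: box_norm_def powr_mult)
qed

lemma box_norm_modulate:
  "box_norm (Suc (Suc s)) R (\<lambda>y. cis (\<theta> * of_int y) * w y) = box_norm (Suc (Suc s)) R w"
proof -
  have phase: "cis (\<theta> * of_int y) * w y * cnj (cis (\<theta> * of_int (y + t)) * w (y + t))
      = cis (- (\<theta> * of_int t)) * (w y * cnj (w (y + t)))" for y t
    by (simp add: cis_cnj cis_mult algebra_simps)
  \<comment> \<open>in each multiplicative derivative the phase becomes a constant of modulus one\<close>
  have "gowers_sum (Suc (Suc s)) R (\<lambda>y. cis (\<theta> * of_int y) * w y) = gowers_sum (Suc (Suc s)) R w"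
    unfolding gowers_sum_Suc_eq_sum[of "Suc s"] phase
    unfolding gowers_sum_def gowers_inner_scale
    by (simp only: prod_conj_pow_unimodular norm_cis mult_1)
  then show ?thesis
    by (simp add: box_norm_def)
qed

lemma box_norm_translate:
  assumes "vanishes_outside R w" "vanishes_outside R (\<lambda>y. w (y - c))"
  shows "box_norm s R (\<lambda>y. w (y - c)) = box_norm s R w"
proof -
  have "(\<Sum>x\<in>{0..<R}. cube_prod s w h (x + - c)) = (\<Sum>x\<in>{0..<R}. cube_prod s w h x)" for h
  proof (rule sum_shift_eq)
    fix y assume "cube_prod s w h y \<noteq> 0"
    then have "w y \<noteq> 0" "w ((y + c) - c) \<noteq> 0"
      using cube_prod_eq_0 by auto
    then show "y - - c \<in> {0..<R} \<longleftrightarrow> y \<in> {0..<R}"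
      using assms unfolding vanishes_outside_def by (metis atLeastLessThan_iff diff_minus_eq_add)
  qed auto
  moreover have "cube_prod s (\<lambda>y. w (y - c)) h x = cube_prod s w h (x + - c)" for h x
    unfolding cube_prod_def by (simp add: algebra_simps)
  ultimately show ?thesis
    unfolding box_norm_def gowers_sum_diff_box by simp
qed

section \<open>Additive characters and a smoothed indicator\<close>

definition add_char :: "nat \<Rightarrow> nat \<Rightarrow> int \<Rightarrow> complex" where
  "add_char P \<xi> y = cis (2 * pi * real \<xi> * of_int y / real P)"

lemma add_char_mult: "add_char P \<xi> a * add_char P \<xi> b = add_char P \<xi> (a + b)"
  unfolding add_char_def cis_mult by (simp add: add_divide_distrib distrib_left)

lemma cnj_add_char: "cnj (add_char P \<xi> a) = add_char P \<xi> (- a)"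
  unfolding add_char_def cis_cnj by simp

lemma add_char_eq_cis: "add_char P \<xi> y = cis ((2 * pi * real \<xi> / real P) * of_int y)"
  unfolding add_char_def by (simp add: algebra_simps)

lemma sum_add_char:
  fixes m :: int
  assumes "\<bar>m\<bar> < int P"
  shows "(\<Sum>\<xi><P. add_char P \<xi> m) = (if m = 0 then of_nat P else 0)"
proof (cases "m = 0")
  case False
  define z where "z = cis (2 * pi * of_int m / real P)"
  have pow: "add_char P \<xi> m = z ^ \<xi>" for \<xi>
    unfolding z_def Complex.DeMoivre add_char_def by (simp add: algebra_simps)
  have "z \<noteq> 1"
  proof
    assume "z = 1"
    then obtain n :: int where "2 * pi * of_int m / real P = of_int n * 2 * pi"
      unfolding z_def by (auto simp: complex_eq_iff cos_one_2pi_int)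
    then have "real_of_int m = real_of_int n * real P"
      using assms by (simp add: field_simps)
    then have "m = n * int P"
      by (metis of_int_eq_iff of_int_mult of_int_of_nat_eq)
    moreover from this have "n \<noteq> 0"
      using False by auto
    ultimately have "int P \<le> \<bar>m\<bar>"
      using mult_right_mono[of 1 "\<bar>n\<bar>" "int P"] by (simp add: abs_mult)
    then show False
      using assms by simp
  qed
  moreover have "z ^ P = 1"
    unfolding z_def Complex.DeMoivre using assms by simp
  ultimately show ?thesis
    using geometric_sum[of z P] False by (simp add: pow)
qed (simp add: add_char_def)

lemma parseval_add_char:
  assumes "finite Y" "P > 0" "\<And>y y'. y \<in> Y \<Longrightarrow> y' \<in> Y \<Longrightarrow> \<bar>y - y'\<bar> < int P"
  shows "(\<Sum>\<xi><P. (cmod (\<Sum>y\<in>Y. add_char P \<xi> (- y)))\<^sup>2) = real P * card Y"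
proof -
  have "complex_of_real (\<Sum>\<xi><P. (cmod (\<Sum>y\<in>Y. add_char P \<xi> (- y)))\<^sup>2)
      = (\<Sum>\<xi><P. \<Sum>y\<in>Y. \<Sum>y'\<in>Y. add_char P \<xi> (y - y'))"
    by (simp only: of_real_sum complex_norm_square sum_distrib_left sum_distrib_right cnj_sum
        cnj_add_char add_char_mult) (simp add: algebra_simps)
  also have "\<dots> = (\<Sum>y\<in>Y. \<Sum>y'\<in>Y. \<Sum>\<xi><P. add_char P \<xi> (y - y'))"
    by (subst sum.swap) (subst (2) sum.swap, rule refl)
  also have "\<dots> = (\<Sum>y\<in>Y. \<Sum>y'\<in>Y. if y' = y then of_nat P else 0)"
    by (intro sum.cong refl) (subst sum_add_char, use assms in auto)
  also have "\<dots> = of_real (real P * card Y)"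
    using assms(1) by simp
  finally show ?thesis
    by (simp only: of_real_eq_iff)
qed

text \<open>The convolution of the indicator of [0,L) with the normalised indicator of [0,K): a
  trapezoid whose Fourier coefficients modulo P have l1-norm at most sqrt(L/K).\<close>

definition smoothed_indicator :: "int \<Rightarrow> int \<Rightarrow> int \<Rightarrow> real" where
  "smoothed_indicator L K x = real (card ({0..<L} \<inter> {x-K<..x})) / of_int K"

definition smoothed_indicator_coeff :: "nat \<Rightarrow> int \<Rightarrow> int \<Rightarrow> nat \<Rightarrow> complex" where
  "smoothed_indicator_coeff P L K \<xi> =
     (\<Sum>y\<in>{0..<L}. add_char P \<xi> (- y)) * (\<Sum>z\<in>{0..<K}. add_char P \<xi> (- z)) / (of_int K * of_nat P)"

lemma smoothed_indicator_fourier: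
  assumes "K > 0" "L \<ge> 0" "0 \<le> x" "x < int P" "L + K \<le> int P"
  shows "(\<Sum>\<xi><P. smoothed_indicator_coeff P L K \<xi> * add_char P \<xi> x) = of_real (smoothed_indicator L K x)"
proof -
  have "(\<Sum>\<xi><P. smoothed_indicator_coeff P L K \<xi> * add_char P \<xi> x)
      = (\<Sum>\<xi><P. \<Sum>y\<in>{0..<L}. \<Sum>z\<in>{0..<K}. add_char P \<xi> (x - y - z) / (of_int K * of_nat P))"
    unfolding smoothed_indicator_coeff_def
    by (simp add: sum_distrib_left sum_distrib_right sum_divide_distrib add_char_mult algebra_simps)
  also have "\<dots> = (\<Sum>y\<in>{0..<L}. \<Sum>z\<in>{0..<K}. (\<Sum>\<xi><P. add_char P \<xi> (x - y - z)) / (of_int K * of_nat P))"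
    by (subst sum.swap) (intro sum.cong refl, subst sum.swap, simp add: sum_divide_distrib)
  also have "\<dots> = (\<Sum>y\<in>{0..<L}. \<Sum>z\<in>{0..<K}. if z = x - y then 1 / of_int K else 0)"
    using assms by (intro sum.cong refl) (auto simp: sum_add_char)
  also have "\<dots> = of_nat (card ({0..<L} \<inter> {y. x - y \<in> {0..<K}})) / of_int K"
    by (simp add: sum.If_cases)
  also have "{0..<L} \<inter> {y. x - y \<in> {0..<K}} = {0..<L} \<inter> {x-K<..x}"
    by auto
  finally show ?thesis
    unfolding smoothed_indicator_def by simp
qed

lemma smoothed_indicator_bounds: "K > 0 \<Longrightarrow> 0 \<le> smoothed_indicator L K x \<and> smoothed_indicator L K x \<le> 1"
  unfolding smoothed_indicator_def
  using card_mono[of "{x-K<..x}" "{0..<L} \<inter> {x-K<..x}"] by (simp add: divide_le_eq)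

lemma smoothed_indicator_exact:
  assumes "K > 0" "0 \<le> x" "x \<notin> {0..<K-1} \<union> {L..<L+K-1}"
  shows "smoothed_indicator L K x = of_bool (x < L)"
proof (cases "x < L")
  case True
  then have "{0..<L} \<inter> {x-K<..x} = {x-K<..x}"
    using assms by auto
  then show ?thesis
    using True assms(1) by (simp add: smoothed_indicator_def)
next
  case False
  then have "{0..<L} \<inter> {x-K<..x} = {}"
    using assms by auto
  then show ?thesis
    using False by (simp add: smoothed_indicator_def)
qed

lemma sum_norm_smoothed_indicator_coeff_le:
  assumes "K > 0" "L \<ge> 0" "K \<le> int P" "L \<le> int P"
  shows "(\<Sum>\<xi><P. cmod (smoothed_indicator_coeff P L K \<xi>)) \<le> sqrt (of_int L) / sqrt (of_int K)"
proof -
  define A where "A T \<xi> = cmod (\<Sum>y\<in>{0..<T}. add_char P \<xi> (- y))" for T \<xi>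
  have parseval: "(\<Sum>\<xi><P. (A T \<xi>)\<^sup>2) = real P * of_int T" if "0 \<le> T" "T \<le> int P" for T
    unfolding A_def using that assms by (subst parseval_add_char) auto
  have "(\<Sum>\<xi><P. cmod (smoothed_indicator_coeff P L K \<xi>)) = (\<Sum>\<xi><P. \<bar>A L \<xi>\<bar> * \<bar>A K \<xi>\<bar>) / (of_int K * real P)"
    unfolding smoothed_indicator_coeff_def A_def
    using assms by (simp add: norm_mult norm_divide sum_divide_distrib)
  also have "\<dots> \<le> L2_set (A L) {..<P} * L2_set (A K) {..<P} / (of_int K * real P)"
    using assms by (intro divide_right_mono L2_set_mult_ineq) simp
  also have "\<dots> = sqrt (real P) * sqrt (of_int L) * (sqrt (real P) * sqrt (of_int K)) / (of_int K * real P)"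
    using assms by (simp add: L2_set_def parseval real_sqrt_mult)
  also have "\<dots> = sqrt (of_int L) / sqrt (of_int K)"
    using assms real_sqrt_mult_self[of "of_int K"] real_sqrt_mult_self[of "real P"]
    by (simp add: field_simps)
  finally show ?thesis .
qed

section \<open>Restriction to an initial segment\<close>

definition trunc_seq :: "(nat \<Rightarrow> complex) \<Rightarrow> int \<Rightarrow> int \<Rightarrow> complex" where
  "trunc_seq f X y = (if 0 \<le> y \<and> y < X then f (nat y) else 0)"

lemma vanishes_outside_trunc_seq: "X \<le> R \<Longrightarrow> vanishes_outside R (trunc_seq f X)"
  unfolding vanishes_outside_def trunc_seq_def by auto

lemma norm_cube_prod_sparse_le:
  fixes h :: "int \<Rightarrow> complex" and M :: int
  assumes h: "\<And>y. cmod (h y) \<le> 1" "\<And>y. h y \<noteq> 0 \<Longrightarrow> y \<in> E \<and> 0 \<le> y \<and> y < M"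
    and d: "d \<in> diff_box s R"
  shows "cmod (cube_prod s h d x) \<le> of_bool (x \<in> E \<and> d \<in> PiE {1..s} (\<lambda>_. {-x..<M-x}))"
proof (cases "x \<in> E \<and> d \<in> PiE {1..s} (\<lambda>_. {-x..<M-x})")
  case True
  then show ?thesis
    using h(1) by (simp add: cube_prod_def prod_norm[symmetric] prod_le_1)
next
  case False
  have "\<exists>S\<in>Pow {1..s}. h (x + (\<Sum>i\<in>S. d i)) = 0"
  proof (cases "x \<in> E")
    case False
    then show ?thesis
      using h(2) by (intro bexI[of _ "{}"]) auto
  next
    case True
    moreover have "d \<in> extensional {1..s}"
      using d unfolding diff_box_def by (simp add: PiE_iff)
    ultimately obtain i where "i \<in> {1..s}" "d i \<notin> {-x..<M-x}"
      using False unfolding PiE_iff by auto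
    moreover from this have "h (x + d i) = 0"
      using h(2)[of "x + d i"] by force
    ultimately show ?thesis
      by (intro bexI[of _ "{i}"]) auto
  qed
  then have "cube_prod s h d x = 0"
    unfolding cube_prod_def by (intro prod_zero) auto
  then show ?thesis
    by simp
qed

lemma norm_gowers_sum_sparse_le:
  fixes h :: "int \<Rightarrow> complex" and M :: int
  assumes h: "\<And>y. cmod (h y) \<le> 1" "\<And>y. h y \<noteq> 0 \<Longrightarrow> y \<in> E \<and> 0 \<le> y \<and> y < M"
    and "finite E"
  shows "cmod (gowers_sum s R h) \<le> real (card E) * real (nat M) ^ s"
proof -
  define Q where "Q x = PiE {1..s} (\<lambda>_. {-x..<M-x})" for x :: int
  have count: "(\<Sum>d\<in>diff_box s R. of_bool (x \<in> E \<and> d \<in> Q x)) \<le> of_bool (x \<in> E) * real (nat M) ^ s"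
    for x :: int
  proof -
    have "card (diff_box s R \<inter> Q x) \<le> card (Q x)"
      by (intro card_mono) (auto simp: Q_def intro!: finite_PiE)
    then show ?thesis
      by (simp add: Q_def card_PiE of_bool_def sum.If_cases flip: of_nat_power)
  qed
  have "cmod (gowers_sum s R h) \<le> (\<Sum>d\<in>diff_box s R. \<Sum>x\<in>{0..<R}. cmod (cube_prod s h d x))"
    unfolding gowers_sum_diff_box by (intro order_trans[OF norm_sum] sum_mono norm_sum)
  also have "\<dots> \<le> (\<Sum>x\<in>{0..<R}. \<Sum>d\<in>diff_box s R. of_bool (x \<in> E \<and> d \<in> Q x))"
    unfolding Q_def using h by (subst sum.swap) (intro sum_mono norm_cube_prod_sparse_le)
  also have "\<dots> \<le> (\<Sum>x\<in>{0..<R}. of_bool (x \<in> E) * real (nat M) ^ s)"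
    by (intro sum_mono count)
  also have "\<dots> = real (card ({0..<R} \<inter> E)) * real (nat M) ^ s"
    by (simp add: of_bool_def sum.If_cases flip: sum_distrib_right)
  also have "\<dots> \<le> real (card E) * real (nat M) ^ s"
    using card_mono[OF assms(3), of "{0..<R} \<inter> E"] by (simp add: mult_right_mono)
  finally show ?thesis .
qed

lemma box_norm_trig_poly_mult_le:
  assumes "vanishes_outside R w"
  shows "box_norm (Suc (Suc s)) R (\<lambda>y. \<Sum>\<xi><P. c \<xi> * (add_char P \<xi> y * w y))
    \<le> (\<Sum>\<xi><P. cmod (c \<xi>)) * box_norm (Suc (Suc s)) R w"
proof -
  have "box_norm (Suc (Suc s)) R (\<lambda>y. \<Sum>\<xi><P. c \<xi> * (add_char P \<xi> y * w y))
      \<le> (\<Sum>\<xi><P. box_norm (Suc (Suc s)) R (\<lambda>y. c \<xi> * (add_char P \<xi> y * w y)))"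
    using assms by (intro box_norm_sum_le) (auto simp: vanishes_outside_def)
  also have "\<dots> = (\<Sum>\<xi><P. cmod (c \<xi>) * box_norm (Suc (Suc s)) R w)"
    by (simp only: box_norm_scale add_char_eq_cis box_norm_modulate)
  finally show ?thesis
    by (simp add: sum_distrib_right)
qed

lemma box_norm_smoothing_error_le:
  fixes f :: "nat \<Rightarrow> complex" and L M K :: int
  assumes f: "\<And>n. cmod (f n) \<le> 1" and "0 \<le> L" "L \<le> M" "0 < K"
  shows "box_norm s R (\<lambda>y. trunc_seq f M y * of_real (of_bool (y < L) - smoothed_indicator L K y))
    \<le> (2 * of_int K * of_int M ^ s) powr (1 / 2 ^ s)"
proof -
  define E where "E = {0..<K-1} \<union> {L..<L+K-1}"
  define h where "h y = trunc_seq f M y * of_real (of_bool (y < L) - smoothed_indicator L K y)" for y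
  have "cmod (h y) \<le> 1" for y
  proof -
    have "\<bar>of_bool (y < L) - smoothed_indicator L K y\<bar> \<le> 1"
      using smoothed_indicator_bounds[OF \<open>0 < K\<close>, of L y] by auto
    moreover have "cmod (trunc_seq f M y) \<le> 1"
      using f by (simp add: trunc_seq_def)
    ultimately show ?thesis
      unfolding h_def norm_mult norm_of_real by (simp add: mult_le_one)
  qed
  moreover have "y \<in> E \<and> 0 \<le> y \<and> y < M" if "h y \<noteq> 0" for y
  proof -
    have "0 \<le> y" "y < M" "of_bool (y < L) \<noteq> smoothed_indicator L K y"
      using that by (auto simp: h_def trunc_seq_def split: if_splits)
    then show ?thesis
      using smoothed_indicator_exact[OF \<open>0 < K\<close>, of y L] unfolding E_def by auto
  qed
  ultimately have "cmod (gowers_sum s R h) \<le> real (card E) * real (nat M) ^ s"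
    using assms by (intro norm_gowers_sum_sparse_le) (auto simp: E_def)
  also have "\<dots> \<le> 2 * of_int K * of_int M ^ s"
  proof -
    have "card E \<le> 2 * nat K"
      unfolding E_def using card_Un_le[of "{0..<K-1}" "{L..<L+K-1}"] by simp
    then have "real (card E) \<le> 2 * of_int K"
      using assms by linarith
    moreover have "real (nat M) = of_int M"
      using assms by simp
    ultimately show ?thesis
      using assms by (simp only:) (intro mult_right_mono, auto)
  qed
  finally show ?thesis
    unfolding box_norm_def h_def[symmetric] by (rule powr_mono2[rotated 2]) auto
qed

lemma box_norm_trunc_seq_le:
  fixes f :: "nat \<Rightarrow> complex" and L M K R :: int
  assumes f: "\<And>n. cmod (f n) \<le> 1" and L: "0 \<le> L" "L \<le> M" and K: "0 < K" and "M \<le> R"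
  shows "box_norm (Suc (Suc s)) R (trunc_seq f L)
    \<le> sqrt (of_int L) / sqrt (of_int K) * box_norm (Suc (Suc s)) R (trunc_seq f M)
      + (2 * of_int K * of_int M ^ Suc (Suc s)) powr (1 / 2 ^ Suc (Suc s))"
proof -
  define P where "P = nat (M + K)"
  define c where "c = smoothed_indicator_coeff P L K"
  define main where "main y = (\<Sum>\<xi><P. c \<xi> * (add_char P \<xi> y * trunc_seq f M y))" for y
  define err where "err y = trunc_seq f M y * of_real (of_bool (y < L) - smoothed_indicator L K y)" for y
  have "main y = trunc_seq f M y * (\<Sum>\<xi><P. c \<xi> * add_char P \<xi> y)" for y
    unfolding main_def sum_distrib_left by (simp add: mult_ac)
  also have "\<dots> y = trunc_seq f M y * of_real (smoothed_indicator L K y)" for y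
  proof (cases "0 \<le> y \<and> y < M")
    case True
    then have "(\<Sum>\<xi><P. c \<xi> * add_char P \<xi> y) = of_real (smoothed_indicator L K y)"
      unfolding c_def using L K by (intro smoothed_indicator_fourier) (auto simp: P_def)
    then show ?thesis
      by simp
  qed (auto simp: trunc_seq_def)
  finally have "trunc_seq f L = (\<lambda>y. main y + err y)"
    using L by (auto simp: err_def trunc_seq_def algebra_simps)
  moreover have "vanishes_outside R main" "vanishes_outside R err"
    using \<open>M \<le> R\<close> by (auto simp: main_def err_def vanishes_outside_def trunc_seq_def)
  ultimately have "box_norm (Suc (Suc s)) R (trunc_seq f L)
      \<le> box_norm (Suc (Suc s)) R main + box_norm (Suc (Suc s)) R err"
    by (simp add: box_norm_add_le)
  also have "box_norm (Suc (Suc s)) R main \<le> (\<Sum>\<xi><P. cmod (c \<xi>)) * box_norm (Suc (Suc s)) R (trunc_seq f M)"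
    unfolding main_def using \<open>M \<le> R\<close> by (intro box_norm_trig_poly_mult_le vanishes_outside_trunc_seq)
  also have "\<dots> \<le> sqrt (of_int L) / sqrt (of_int K) * box_norm (Suc (Suc s)) R (trunc_seq f M)"
    unfolding c_def using L K
    by (intro mult_right_mono sum_norm_smoothed_indicator_coeff_le box_norm_nonneg) (auto simp: P_def)
  also have "box_norm (Suc (Suc s)) R err \<le> (2 * of_int K * of_int M ^ Suc (Suc s)) powr (1 / 2 ^ Suc (Suc s))"
    unfolding err_def using f L K by (rule box_norm_smoothing_error_le)
  finally show ?thesis
    by simp
qed

section \<open>Comparison with the normalised Gowers norm\<close>

lemma gowers_Pi_subset_gowers_box:
  assumes "int N \<le> R"
  shows "gowers_Pi s N \<subseteq> gowers_box s R"
proof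
  fix n assume n: "n \<in> gowers_Pi s N"
  then have vertex: "n 0 + (\<Sum>i\<in>S. n i) \<in> {0..<int N}" if "S \<subseteq> {1..s}" for S
    using that unfolding gowers_Pi_def by blast
  have "n i \<in> (if i = 0 then {0..<R} else {-R<..<R})" if "i \<in> {0..s}" for i
    using vertex[of "{}"] vertex[of "{i}"] that assms by auto
  moreover have "n \<in> extensional {0..s}"
    using n unfolding gowers_Pi_def by (simp add: PiE_iff)
  ultimately show "n \<in> gowers_box s R"
    unfolding gowers_box_def by (simp add: PiE_iff)
qed

lemma finite_gowers_Pi [simp]: "finite (gowers_Pi s N)"
  by (rule finite_subset[OF gowers_Pi_subset_gowers_box[OF order_refl] finite_gowers_box])

lemma sum_gowers_Pi_eq_gowers_sum:
  assumes "int N \<le> R"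
  shows "(\<Sum>n\<in>gowers_Pi s N. \<Prod>S\<in>Pow {1..s}. conj_pow (card S) (f (nat (n 0 + (\<Sum>i\<in>S. n i)))))
    = gowers_sum s R (trunc_seq f (int N))"
  unfolding gowers_sum_def gowers_inner_def
proof (rule sum.mono_neutral_cong_left)
  show "gowers_Pi s N \<subseteq> gowers_box s R"
    by (rule gowers_Pi_subset_gowers_box[OF assms])
  show "\<forall>n\<in>gowers_box s R - gowers_Pi s N.
      (\<Prod>S\<in>Pow {1..s}. conj_pow (card S) (trunc_seq f (int N) (cube_vertex n S))) = 0"
  proof
    fix n assume n: "n \<in> gowers_box s R - gowers_Pi s N"
    then obtain S where "S \<subseteq> {1..s}" "cube_vertex n S \<notin> {0..<int N}"
      unfolding gowers_box_def gowers_Pi_def cube_vertex_def by (auto simp: PiE_iff)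
    then show "(\<Prod>S\<in>Pow {1..s}. conj_pow (card S) (trunc_seq f (int N) (cube_vertex n S))) = 0"
      by (intro prod_zero bexI[of _ S]) (auto simp: trunc_seq_def)
  qed
  show "(\<Prod>S\<in>Pow {1..s}. conj_pow (card S) (f (nat (n 0 + (\<Sum>i\<in>S. n i))))) =
      (\<Prod>S\<in>Pow {1..s}. conj_pow (card S) (trunc_seq f (int N) (cube_vertex n S)))"
    if "n \<in> gowers_Pi s N" for n
    using that unfolding gowers_Pi_def trunc_seq_def cube_vertex_def by (intro prod.cong refl) auto
qed simp

lemma card_gowers_Pi_le: "real (card (gowers_Pi s N)) \<le> 2 ^ s * real N ^ Suc s"
proof -
  have "card (gowers_Pi s N) \<le> card (gowers_box s (int N))"
    by (intro card_mono gowers_Pi_subset_gowers_box) auto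
  also have "\<dots> = N * nat (2 * int N - 1) ^ s"
  proof -
    have "{0..s} = insert 0 {1..s}"
      by auto
    then show ?thesis
      unfolding gowers_box_def by (simp add: card_PiE)
  qed
  also have "\<dots> \<le> N * (2 * N) ^ s"
    by (intro mult_left_mono power_mono) auto
  finally have "real (card (gowers_Pi s N)) \<le> real (N * (2 * N) ^ s)"
    by (simp only: of_nat_le_iff)
  then show ?thesis
    by (simp add: power_mult_distrib mult_ac)
qed

lemma cube_subset_gowers_Pi:
  assumes "a \<ge> 1" "int (Suc s) * (a - 1) \<le> int N - 1"
  shows "PiE {0..s} (\<lambda>_. {0..<a}) \<subseteq> gowers_Pi s N"
proof
  fix n assume n: "n \<in> PiE {0..s} (\<lambda>_. {0..<a})"
  have n_bounds: "0 \<le> n i \<and> n i \<le> a - 1" if "i \<in> {0..s}" for i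
    using n that by (auto simp: PiE_iff)
  have "n 0 + (\<Sum>i\<in>S. n i) \<in> {0..<int N}" if S: "S \<subseteq> {1..s}" for S
  proof -
    have "card S \<le> s"
      using S card_mono[OF _ S] by auto
    have "(\<Sum>i\<in>S. n i) \<le> of_nat (card S) * (a - 1)"
      using n_bounds S by (intro sum_bounded_above) auto
    also have "\<dots> \<le> int s * (a - 1)"
      using \<open>card S \<le> s\<close> \<open>a \<ge> 1\<close> by (intro mult_right_mono) auto
    finally have "(\<Sum>i\<in>S. n i) \<le> int s * (a - 1)" .
    moreover have "0 \<le> (\<Sum>i\<in>S. n i)"
      using n_bounds S by (intro sum_nonneg) auto
    moreover have "(a - 1) + int s * (a - 1) = int (Suc s) * (a - 1)"
      by (simp add: algebra_simps)
    ultimately show ?thesis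
      using n_bounds[of 0] assms(2) by simp
  qed
  then show "n \<in> gowers_Pi s N"
    using n unfolding gowers_Pi_def by (auto simp: PiE_iff)
qed

lemma card_gowers_Pi_ge:
  assumes "N \<ge> 1"
  shows "(real N / real (Suc s)) ^ Suc s \<le> real (card (gowers_Pi s N))"
proof -
  \<comment> \<open>a = (N - 1) div (s + 1) + 1 is the ceiling of N / (s + 1)\<close>
  define d where "d = (int N - 1) div int (Suc s)"
  define r where "r = (int N - 1) mod int (Suc s)"
  define a where "a = d + 1"
  have dr: "int N - 1 = int (Suc s) * d + r" "0 \<le> r" "r < int (Suc s)"
    unfolding d_def r_def by simp_all
  have "int (Suc s) * (a - 1) = int (Suc s) * d" "int (Suc s) * a = int (Suc s) * d + int (Suc s)"
    unfolding a_def by (simp_all add: algebra_simps)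
  then have a: "int (Suc s) * (a - 1) \<le> int N - 1" "int N \<le> int (Suc s) * a"
    using dr by simp_all
  have "a \<ge> 1"
    using assms unfolding a_def d_def by (simp add: pos_imp_zdiv_nonneg_iff)
  have "card (PiE {0..s} (\<lambda>_. {0..<a})) \<le> card (gowers_Pi s N)"
    using cube_subset_gowers_Pi[OF \<open>a \<ge> 1\<close> a(1)] by (intro card_mono) auto
  then have "real (nat a) ^ Suc s \<le> real (card (gowers_Pi s N))"
    by (simp add: card_PiE flip: of_nat_power of_nat_mult)
  then have "of_int a ^ Suc s \<le> real (card (gowers_Pi s N))"
    using \<open>a \<ge> 1\<close> by simp
  moreover have "real N \<le> real (Suc s) * of_int a"
    using a(2) by (metis of_int_le_iff of_int_mult of_int_of_nat_eq)
  then have "real N / real (Suc s) \<le> of_int a"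
    by (simp only: divide_le_eq mult.commute) simp
  ultimately show ?thesis
    by (meson order_trans power_mono zero_le_divide_iff of_nat_0_le_iff)
qed

lemma card_gowers_Pi_pos:
  assumes "N \<ge> 1"
  shows "real (card (gowers_Pi s N)) > 0"
proof -
  have "0 < (real N / real (Suc s)) ^ Suc s"
    using assms by simp
  also have "\<dots> \<le> real (card (gowers_Pi s N))"
    by (rule card_gowers_Pi_ge[OF assms])
  finally show ?thesis .
qed

lemma norm_gowers_pow:
  assumes "N \<ge> 1" "int N \<le> R"
  shows "cmod (gowers_pow s N f) =
    cmod (gowers_sum s R (trunc_seq f (int N))) / real (card (gowers_Pi s N))"
  unfolding gowers_pow_def sum_gowers_Pi_eq_gowers_sum[OF assms(2)]
  using card_gowers_Pi_pos[OF assms(1)] by (simp add: norm_mult norm_divide)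

lemma gowers_norm_eq_box_norm:
  assumes "N \<ge> 1" "int N \<le> R"
  shows "gowers_norm s N f =
    box_norm s R (trunc_seq f (int N)) / real (card (gowers_Pi s N)) powr (1 / 2 ^ s)"
  using card_gowers_Pi_pos[OF assms(1)]
  by (simp add: gowers_norm_def norm_gowers_pow[OF assms] box_norm_def root_powr_inverse powr_divide)

lemma gowers_norm_power:
  assumes "N \<ge> 1" "int N \<le> R"
  shows "gowers_norm s N f ^ 2 ^ s =
    cmod (gowers_sum s R (trunc_seq f (int N))) / real (card (gowers_Pi s N))"
  unfolding gowers_norm_def norm_gowers_pow[OF assms, symmetric] by simp

lemma norm_gowers_sum_trunc_seq_le:
  assumes "\<And>n. cmod (f n) \<le> 1" "int N \<le> R"
  shows "cmod (gowers_sum s R (trunc_seq f (int N))) \<le> real (card (gowers_Pi s N))"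
proof -
  have "cmod (gowers_sum s R (trunc_seq f (int N)))
      \<le> (\<Sum>n\<in>gowers_Pi s N. \<Prod>S\<in>Pow {1..s}. cmod (f (nat (n 0 + (\<Sum>i\<in>S. n i)))))"
    unfolding sum_gowers_Pi_eq_gowers_sum[OF assms(2), symmetric]
    by (rule order_trans[OF norm_sum]) (simp add: prod_norm[symmetric])
  also have "\<dots> \<le> (\<Sum>n\<in>gowers_Pi s N. 1)"
    using assms(1) by (intro sum_mono prod_le_1) auto
  finally show ?thesis
    by simp
qed

lemma norm_gowers_sum_trunc_seq_ge:
  assumes "\<And>n. cmod (f n) = 1" "M \<ge> 1" "int M \<le> R"
  shows "real M ^ 2 \<le> cmod (gowers_sum (Suc (Suc s)) R (trunc_seq f (int M)))"
proof -
  define zero where "zero = (\<lambda>i\<in>{1..Suc s}. 0::int)"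
  have "zero \<in> diff_box (Suc s) R"
    unfolding zero_def diff_box_def using assms by auto
  have zero_sum: "(\<Sum>i\<in>S. zero i) = 0" if "S \<subseteq> {1..Suc s}" for S
    using that unfolding zero_def by (intro sum.neutral) auto
  \<comment> \<open>the term with all differences zero is a sum of |f|^(2^s) = 1 over [0,M)\<close>
  have zero_term: "cube_prod (Suc s) (trunc_seq f (int M)) zero x = of_bool (x \<in> {0..<int M})" for x
  proof (cases "x \<in> {0..<int M}")
    case True
    have "cube_prod (Suc s) (trunc_seq f (int M)) zero x = (\<Prod>S\<in>Pow {1..Suc s}. conj_pow (card S) (f (nat x)))"
      unfolding cube_prod_def using True by (intro prod.cong refl) (simp add: zero_sum trunc_seq_def)
    also have "\<dots> = 1"
      by (rule prod_conj_pow_unimodular[OF assms(1)])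
    finally show ?thesis
      using True by simp
  qed (auto simp: cube_prod_eq_0 trunc_seq_def)
  have "cube_sum (Suc s) R (trunc_seq f (int M)) zero = of_nat M"
  proof -
    have "{0..<R} \<inter> {x. x < int M} = {0..<int M}"
      using assms(3) by auto
    then show ?thesis
      unfolding cube_sum_def zero_term by (simp add: of_bool_def sum.If_cases)
  qed
  then have "real M ^ 2 = (cmod (cube_sum (Suc s) R (trunc_seq f (int M)) zero))\<^sup>2"
    by simp
  also have "\<dots> \<le> (\<Sum>d\<in>diff_box (Suc s) R. (cmod (cube_sum (Suc s) R (trunc_seq f (int M)) d))\<^sup>2)"
    using \<open>zero \<in> diff_box (Suc s) R\<close> by (intro member_le_sum) auto
  also have "\<dots> = cmod (gowers_sum (Suc (Suc s)) R (trunc_seq f (int M)))"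
    using assms(3) by (simp add: norm_gowers_sum_Suc vanishes_outside_trunc_seq)
  finally show ?thesis .
qed

lemma gowers_norm_le_1:
  assumes "\<And>n. cmod (f n) \<le> 1" "M \<ge> 1"
  shows "gowers_norm s M f \<le> 1"
proof -
  have "cmod (gowers_sum s (int M) (trunc_seq f (int M))) \<le> real (card (gowers_Pi s M))"
    using assms(1) by (rule norm_gowers_sum_trunc_seq_le) simp
  then have "gowers_norm s M f ^ 2 ^ s \<le> 1"
    using gowers_norm_power[of M "int M" s f] card_gowers_Pi_pos[of M s] assms(2) by simp
  then show ?thesis
    by (simp add: power_le_one_iff gowers_norm_def)
qed

lemma gowers_norm_power_ge:
  assumes "\<And>n. cmod (f n) = 1" "M \<ge> 1" "s \<ge> 2"
  shows "real M ^ 2 \<le> gowers_norm s M f ^ 2 ^ s * (2 ^ s * real M ^ Suc s)"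
proof -
  have "real M ^ 2 \<le> cmod (gowers_sum s (int M) (trunc_seq f (int M)))"
    using norm_gowers_sum_trunc_seq_ge[OF assms(1,2), of "int M" "s - 2"] assms(3)
    by (simp add: numeral_2_eq_2 Suc_diff_Suc)
  also have "\<dots> = gowers_norm s M f ^ 2 ^ s * real (card (gowers_Pi s M))"
    using gowers_norm_power[of M "int M" s f] card_gowers_Pi_pos[of M s] assms(2)
    by (simp add: eq_divide_eq card_gt_0_iff)
  also have "\<dots> \<le> gowers_norm s M f ^ 2 ^ s * (2 ^ s * real M ^ Suc s)"
    by (intro mult_left_mono card_gowers_Pi_le) (simp add: gowers_norm_def)
  finally show ?thesis .
qed

lemma gowers_norm_lower_bound:
  assumes f: "\<And>n. cmod (f n) = 1" and "M \<ge> 1" "s \<ge> 2"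
  shows "1 \<le> 2 ^ s * (real M * gowers_norm s M f)"
proof -
  obtain s' where s: "s = Suc (Suc s')"
    using \<open>s \<ge> 2\<close> by (metis add_2_eq_Suc le_Suc_ex)
  define x where "x = gowers_norm s M f"
  have "0 \<le> x" "x \<le> 1"
    unfolding x_def using gowers_norm_le_1[of f M s] f \<open>M \<ge> 1\<close> by (simp_all add: gowers_norm_def)
  \<comment> \<open>x^(2^s) \<ge> 1 / (2^s M^(s-1)) is only compatible with x M \<ge> 2^(-s) since x \<le> 1\<close>
  have "real M ^ 2 \<le> x ^ 2 ^ s * (2 ^ s * real M ^ Suc s)"
    unfolding x_def by (rule gowers_norm_power_ge[OF assms])
  also have "\<dots> \<le> x ^ Suc s' * (2 ^ s * real M ^ Suc s)"
    using less_exp[of s] s \<open>0 \<le> x\<close> \<open>x \<le> 1\<close> by (intro mult_right_mono power_decreasing) auto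
  also have "\<dots> = real M ^ 2 * (2 ^ s * (real M * x) ^ Suc s')"
    unfolding s by (simp add: power_mult_distrib power2_eq_square algebra_simps)
  finally have "1 \<le> 2 ^ s * (real M * x) ^ Suc s'"
    using \<open>M \<ge> 1\<close> by simp
  show ?thesis
  proof (cases "real M * x \<le> 1")
    case True
    then have "(real M * x) ^ Suc s' \<le> real M * x"
      using \<open>0 \<le> x\<close> power_decreasing[of 1 "Suc s'" "real M * x"] by simp
    then have "2 ^ s * (real M * x) ^ Suc s' \<le> 2 ^ s * (real M * x)"
      by (rule mult_left_mono) simp
    with \<open>1 \<le> 2 ^ s * (real M * x) ^ Suc s'\<close> show ?thesis
      unfolding x_def by linarith
  next
    case False
    then have "1 * 1 \<le> 2 ^ s * (real M * x)"
      by (intro mult_mono) auto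
    then show ?thesis
      unfolding x_def by simp
  qed
qed

lemma gowers_norm_pos:
  assumes f: "\<And>n. cmod (f n) = 1" and "M \<ge> 1" "s \<ge> 2"
  shows "gowers_norm s M f > 0"
proof -
  have "1 \<le> 2 ^ s * (real M * gowers_norm s M f)"
    by (rule gowers_norm_lower_bound) (use assms in auto)
  then have "gowers_norm s M f \<noteq> 0"
    by auto
  moreover have "gowers_norm s M f \<ge> 0"
    by (simp add: gowers_norm_def)
  ultimately show ?thesis
    by simp
qed

section \<open>Splitting into q-adic blocks\<close>

lemma q_multiplicative_add_mult:
  assumes "q_multiplicative q f" "m < q ^ k"
  shows "f (m + a * q ^ k) = f m * f (a * q ^ k)"
  using assms(1)[unfolded q_multiplicative_def, rule_format, of m k "a * q ^ k"] assms(2) by simp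

text \<open>Block a covers [a Q, a Q + block_len N Q a); the blocks with a \<le> N div Q partition [0,N),
  the last one being possibly empty.\<close>

definition block_len :: "nat \<Rightarrow> nat \<Rightarrow> nat \<Rightarrow> nat" where
  "block_len N Q a = (if a < N div Q then Q else N mod Q)"

lemma block_len_le: "Q \<ge> 1 \<Longrightarrow> block_len N Q a \<le> Q"
  unfolding block_len_def by simp

lemma block_end_le:
  assumes "a \<le> N div Q"
  shows "a * Q + block_len N Q a \<le> N"
proof (cases "a < N div Q")
  case True
  then have "(a + 1) * Q \<le> N div Q * Q"
    by (intro mult_right_mono) auto
  also have "\<dots> \<le> N"
    by (rule div_times_less_eq_dividend)
  finally show ?thesis
    using True by (simp add: block_len_def)
next
  case False
  then have "a = N div Q"
    using assms by simp
  then show ?thesis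
    using False div_mult_mod_eq[of N Q] by (simp add: block_len_def)
qed

lemma mem_block_iff:
  assumes "Q \<ge> 1" "a \<le> N div Q"
  shows "a * Q \<le> n \<and> n < a * Q + block_len N Q a \<longleftrightarrow> n < N \<and> n div Q = a"
proof
  assume n: "a * Q \<le> n \<and> n < a * Q + block_len N Q a"
  then have "n div Q = a"
    using block_len_le[OF assms(1), of N a] by (intro div_nat_eqI) (simp_all add: algebra_simps)
  moreover have "n < N"
    using n block_end_le[OF assms(2)] by linarith
  ultimately show "n < N \<and> n div Q = a"
    by simp
next
  assume n: "n < N \<and> n div Q = a"
  have "n = a * Q + n mod Q" "n mod Q < Q"
    using div_mult_mod_eq[of n Q] assms(1) n by simp_all
  moreover have "a * Q + block_len N Q a = N" if "\<not> a < N div Q"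
    using that assms(2) div_mult_mod_eq[of N Q] by (simp add: block_len_def)
  ultimately show "a * Q \<le> n \<and> n < a * Q + block_len N Q a"
    using n unfolding block_len_def by (cases "a < N div Q") auto
qed

lemma block_term_eq:
  assumes qm: "q_multiplicative q f" and Q: "Q = q ^ k" "Q \<ge> 1" and a: "a \<le> N div Q"
  shows "f (a * Q) * trunc_seq f (int (block_len N Q a)) (int n - int (a * Q)) =
    (if n < N \<and> n div Q = a then f n else 0)"
proof (cases "a * Q \<le> n \<and> n < a * Q + block_len N Q a")
  case True
  define m where "m = n - a * Q"
  have m: "n = m + a * Q" "m < block_len N Q a"
    using True unfolding m_def by auto
  have "m < q ^ k"
    using m(2) block_len_le[OF Q(2), of N a] Q(1) by linarith
  then have "f n = f m * f (a * Q)"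
    unfolding m(1) Q(1) by (rule q_multiplicative_add_mult[OF qm])
  moreover have "n < N \<and> n div Q = a"
    using True mem_block_iff[OF Q(2) a] by blast
  ultimately show ?thesis
    using m by (simp add: trunc_seq_def)
next
  case False
  then have "\<not> (n < N \<and> n div Q = a)"
    using mem_block_iff[OF Q(2) a, of n] by blast
  moreover have "trunc_seq f (int (block_len N Q a)) (int n - int (a * Q)) = 0"
    using False by (auto simp: trunc_seq_def simp del: of_nat_mult)
  ultimately show ?thesis
    by auto
qed

lemma trunc_seq_block_decomp:
  assumes qm: "q_multiplicative q f" and Q: "Q = q ^ k" "Q \<ge> 1"
  shows "trunc_seq f (int N) y =
    (\<Sum>a\<le>N div Q. f (a * Q) * trunc_seq f (int (block_len N Q a)) (y - int (a * Q)))"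
proof (cases "y \<ge> 0")
  case True
  then obtain n where n: "y = int n"
    using nonneg_eq_int by blast
  have "(\<Sum>a\<le>N div Q. f (a * Q) * trunc_seq f (int (block_len N Q a)) (y - int (a * Q)))
      = (\<Sum>a\<le>N div Q. if n < N \<and> n div Q = a then f n else 0)"
    unfolding n using block_term_eq[OF qm Q] by (intro sum.cong) auto
  also have "\<dots> = trunc_seq f (int N) y"
    using div_le_mono[of n N Q] unfolding n trunc_seq_def by auto
  finally show ?thesis ..
next
  case False
  then show ?thesis
    by (auto simp: trunc_seq_def simp del: of_nat_mult intro!: sum.neutral)
qed

lemma box_norm_trunc_seq_le_sum_blocks:
  assumes qm: "q_multiplicative q f" and f: "\<And>n. cmod (f n) = 1" and Q: "Q = q ^ k" "Q \<ge> 1"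
    and "int N \<le> R"
  shows "box_norm (Suc s) R (trunc_seq f (int N)) \<le>
    (\<Sum>a\<le>N div Q. box_norm (Suc s) R (trunc_seq f (int (block_len N Q a))))"
proof -
  let ?block = "\<lambda>a y. trunc_seq f (int (block_len N Q a)) (y - int (a * Q))"
  have vanishes: "vanishes_outside R (trunc_seq f (int (block_len N Q a)))" "vanishes_outside R (?block a)"
    if "a \<le> N div Q" for a
  proof -
    have bounds: "int (a * Q) + int (block_len N Q a) \<le> int N" "0 \<le> int (a * Q)"
      using block_end_le[OF that] by (simp only: of_nat_add[symmetric] of_nat_le_iff) simp
    then have "int (block_len N Q a) \<le> R"
      using \<open>int N \<le> R\<close> by linarith
    then show "vanishes_outside R (trunc_seq f (int (block_len N Q a)))"
      by (rule vanishes_outside_trunc_seq)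
    show "vanishes_outside R (?block a)"
      unfolding vanishes_outside_def
    proof (intro allI impI)
      fix y assume "?block a y \<noteq> 0"
      then have "0 \<le> y - int (a * Q)" "y - int (a * Q) < int (block_len N Q a)"
        unfolding trunc_seq_def by (auto split: if_splits)
      then show "0 \<le> y \<and> y < R"
        using bounds \<open>int N \<le> R\<close> by linarith
    qed
  qed
  have "trunc_seq f (int N) = (\<lambda>y. \<Sum>a\<le>N div Q. f (a * Q) * ?block a y)"
    by (rule ext) (rule trunc_seq_block_decomp[OF qm Q])
  then have "box_norm (Suc s) R (trunc_seq f (int N))
      \<le> (\<Sum>a\<le>N div Q. box_norm (Suc s) R (\<lambda>y. f (a * Q) * ?block a y))"
    by (simp only:) (intro box_norm_sum_le vanishes_outside_mult_left vanishes; simp)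
  also have "\<dots> = (\<Sum>a\<le>N div Q. box_norm (Suc s) R (trunc_seq f (int (block_len N Q a))))"
    using vanishes by (intro sum.cong refl) (simp add: box_norm_scale f box_norm_translate)
  finally show ?thesis .
qed

lemma box_norm_trunc_seq_le_blocks_smoothed:
  fixes f :: "nat \<Rightarrow> complex" and N M k :: nat and K R :: int
  assumes qm: "q_multiplicative q f" and f: "\<And>n. cmod (f n) = 1"
    and "q \<ge> 1" "q ^ k \<le> M" "0 < K" "int N \<le> R" "int M \<le> R"
  shows "box_norm (Suc (Suc s)) R (trunc_seq f (int N)) \<le> real (N div q ^ k + 1) *
    (sqrt (real M) / sqrt (of_int K) * box_norm (Suc (Suc s)) R (trunc_seq f (int M))
      + (2 * of_int K * real M ^ Suc (Suc s)) powr (1 / 2 ^ Suc (Suc s)))"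
    (is "_ \<le> _ * ?bound")
proof -
  define Q where "Q = q ^ k"
  have "Q \<ge> 1"
    unfolding Q_def using \<open>q \<ge> 1\<close> by simp
  have block: "box_norm (Suc (Suc s)) R (trunc_seq f (int L)) \<le> ?bound" if "L \<le> M" for L
  proof -
    have "box_norm (Suc (Suc s)) R (trunc_seq f (int L))
        \<le> sqrt (of_int (int L)) / sqrt (of_int K) * box_norm (Suc (Suc s)) R (trunc_seq f (int M))
          + (2 * of_int K * of_int (int M) ^ Suc (Suc s)) powr (1 / 2 ^ Suc (Suc s))"
      using f that assms by (intro box_norm_trunc_seq_le) auto
    also have "\<dots> \<le> ?bound"
      using that \<open>0 < K\<close> by (auto intro!: mult_right_mono divide_right_mono box_norm_nonneg)
    finally show ?thesis .
  qed
  have "block_len N Q a \<le> M" for a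
    using block_len_le[OF \<open>Q \<ge> 1\<close>, of N a] \<open>q ^ k \<le> M\<close> unfolding Q_def by linarith
  then have "(\<Sum>a\<le>N div Q. box_norm (Suc (Suc s)) R (trunc_seq f (int (block_len N Q a))))
      \<le> real (N div Q + 1) * ?bound"
    using sum_mono[of "{..N div Q}", OF block] by simp
  with box_norm_trunc_seq_le_sum_blocks[OF qm f Q_def \<open>Q \<ge> 1\<close> \<open>int N \<le> R\<close>, of "Suc s"]
  show ?thesis
    unfolding Q_def by (rule order_trans)
qed

lemma smoothing_main_term_le:
  fixes x m p lam K B :: real
  assumes "0 < x" "x \<le> 1" "x * m \<le> K" "0 < K" "0 < p" "p \<le> B" "0 < lam" "lam \<le> 1 / 2"
  shows "sqrt m / sqrt K * (x * p powr lam) \<le> x powr lam * B powr lam"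
proof -
  have "sqrt x * sqrt m \<le> sqrt K"
    using assms(3) by (simp add: real_sqrt_mult[symmetric] mult.commute)
  then have "sqrt m / sqrt K \<le> 1 / sqrt x"
    using assms(1,4) by (simp add: divide_simps mult.commute)
  then have "sqrt m / sqrt K * (x * p powr lam) \<le> 1 / sqrt x * (x * p powr lam)"
    using assms(1) by (intro mult_right_mono) auto
  also have "\<dots> = x / sqrt x * p powr lam"
    by simp
  also have "\<dots> = sqrt x * p powr lam"
    using assms(1) by (simp only: real_div_sqrt less_imp_le)
  also have "\<dots> \<le> x powr lam * B powr lam"
    using assms powr_mono'[of lam "1/2" x] by (intro mult_mono powr_mono2) (auto simp: powr_half_sqrt)
  finally show ?thesis .
qed

lemma smoothing_error_term_le:
  fixes x m lam K :: real
  assumes "0 < x" "0 < m" "0 < K" "K \<le> x * m + 1" "1 \<le> 2 ^ s * (m * x)" "s \<ge> 1" "0 < lam" "lam \<le> 1"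
  shows "(2 * K * m ^ s) powr lam \<le> (1 + 2 ^ s) * x powr lam * (2 ^ s * m ^ Suc s) powr lam"
proof -
  have "2 * K * m ^ s \<le> 2 * (x * m + 2 ^ s * (m * x)) * m ^ s"
    using assms(2,4,5) by (intro mult_right_mono) auto
  also have "\<dots> = 2 * ((1 + 2 ^ s) * x * m ^ Suc s)"
    by (simp add: algebra_simps)
  also have "\<dots> \<le> 2 ^ s * ((1 + 2 ^ s) * x * m ^ Suc s)"
    using power_increasing[of 1 s "2::real"] assms by (intro mult_right_mono) auto
  finally have "(2 * K * m ^ s) powr lam \<le> ((1 + 2 ^ s) * (x * (2 ^ s * m ^ Suc s))) powr lam"
    using assms by (intro powr_mono2) (auto simp: algebra_simps)
  also have "\<dots> = (1 + 2 ^ s) powr lam * (x powr lam * (2 ^ s * m ^ Suc s) powr lam)"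
    using assms by (simp add: powr_mult)
  also have "\<dots> \<le> (1 + 2 ^ s) * (x powr lam * (2 ^ s * m ^ Suc s) powr lam)"
    using powr_mono[of lam 1 "1 + 2 ^ s :: real"] assms by (intro mult_right_mono) auto
  finally show ?thesis
    by (simp add: mult_ac)
qed

lemma parallelepiped_count_ratio_le:
  fixes eta :: real
  assumes "N \<ge> 1" "eta > 0" "eta * real M < real N"
  shows "2 ^ s * real M ^ Suc s / real (card (gowers_Pi s N)) \<le> (2 * real (Suc s) / eta) ^ Suc s"
proof -
  have "(eta * real M / real (Suc s)) ^ Suc s \<le> (real N / real (Suc s)) ^ Suc s"
    using assms by (intro power_mono divide_right_mono) auto
  also have "\<dots> \<le> real (card (gowers_Pi s N))"
    using assms(1) by (rule card_gowers_Pi_ge)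
  finally have card: "(eta * real M / real (Suc s)) ^ Suc s \<le> real (card (gowers_Pi s N))" .
  have "2 ^ s * real M ^ Suc s \<le> (2 * real M) ^ Suc s"
    by (simp add: power_mult_distrib)
  also have "\<dots> = (2 * real (Suc s) / eta) ^ Suc s * (eta * real M / real (Suc s)) ^ Suc s"
  proof -
    have "(2 * real (Suc s) / eta) * (eta * real M / real (Suc s)) = 2 * real M"
      using assms(2) by (simp add: field_simps del: of_nat_Suc)
    then show ?thesis
      by (simp only: power_mult_distrib[symmetric])
  qed
  also have "\<dots> \<le> (2 * real (Suc s) / eta) ^ Suc s * real (card (gowers_Pi s N))"
    using card assms(2) by (intro mult_left_mono) auto
  finally show ?thesis
    using card_gowers_Pi_pos[OF assms(1)] by (simp add: divide_le_eq)
qed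

lemma gowers_norm_le_block_count_powr:
  fixes f :: "nat \<Rightarrow> complex" and q s N M k :: nat
  assumes "s \<ge> 2" "q \<ge> 1" and qm: "q_multiplicative q f" and f: "\<And>n. cmod (f n) = 1"
    and "N \<ge> 1" "M \<ge> 1" "q ^ k \<le> M"
  shows "gowers_norm s N f \<le> real (N div q ^ k + 1) * (2 + 2 ^ s)
    * (2 ^ s * real M ^ Suc s / real (card (gowers_Pi s N))) powr (1 / 2 ^ s)
    * gowers_norm s M f powr (1 / 2 ^ s)"
proof -
  obtain s' where s: "s = Suc (Suc s')"
    using \<open>s \<ge> 2\<close> by (metis add_2_eq_Suc le_Suc_ex)
  define lam :: real where "lam = 1 / 2 ^ s"
  define R where "R = int N + int M"
  define x where "x = gowers_norm s M f"
  define K where "K = \<lceil>x * real M\<rceil>"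
  define B :: real where "B = 2 ^ s * real M ^ Suc s"
  define pN where "pN = real (card (gowers_Pi s N))"
  define pM where "pM = real (card (gowers_Pi s M))"
  have lam: "0 < lam" "lam \<le> 1 / 2"
    unfolding lam_def using power_increasing[of 1 s "2::real"] \<open>s \<ge> 2\<close> by auto
  have x: "0 < x" "x \<le> 1" "1 \<le> 2 ^ s * (real M * x)"
    unfolding x_def using gowers_norm_pos[OF f \<open>M \<ge> 1\<close> \<open>s \<ge> 2\<close>] gowers_norm_le_1[of f M s]
      gowers_norm_lower_bound[OF f \<open>M \<ge> 1\<close> \<open>s \<ge> 2\<close>] f \<open>M \<ge> 1\<close>
    by auto
  then have "0 < K"
    unfolding K_def using \<open>M \<ge> 1\<close> by simp
  have "pN > 0" "pM > 0"
    unfolding pN_def pM_def using \<open>N \<ge> 1\<close> \<open>M \<ge> 1\<close> by (simp_all only: card_gowers_Pi_pos)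
  have norm_M: "box_norm s R (trunc_seq f (int M)) = x * pM powr lam"
    using gowers_norm_eq_box_norm[of M R s f] \<open>M \<ge> 1\<close> \<open>pM > 0\<close> unfolding x_def pM_def lam_def R_def
    by (simp add: card_gt_0_iff)
  have "box_norm s R (trunc_seq f (int N)) \<le> real (N div q ^ k + 1) *
      (sqrt (real M) / sqrt (of_int K) * box_norm s R (trunc_seq f (int M)) + (2 * of_int K * real M ^ s) powr lam)"
    unfolding s lam_def R_def
    by (rule box_norm_trunc_seq_le_blocks_smoothed[OF qm f \<open>q \<ge> 1\<close> \<open>q ^ k \<le> M\<close> \<open>0 < K\<close>]) auto
  also have "\<dots> = real (N div q ^ k + 1) *
      (sqrt (real M) / sqrt (of_int K) * (x * pM powr lam) + (2 * of_int K * real M ^ s) powr lam)"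
    by (simp only: norm_M)
  also have "\<dots> \<le> real (N div q ^ k + 1) * (x powr lam * B powr lam + (1 + 2 ^ s) * x powr lam * B powr lam)"
    using x \<open>0 < K\<close> lam \<open>pM > 0\<close> card_gowers_Pi_le[of s M] \<open>s \<ge> 2\<close> \<open>M \<ge> 1\<close>
    unfolding K_def B_def pM_def
    by (intro mult_left_mono add_mono smoothing_main_term_le smoothing_error_term_le) auto
  also have "\<dots> = real (N div q ^ k + 1) * ((2 + 2 ^ s) * x powr lam * B powr lam)"
    by (simp add: algebra_simps)
  finally have "box_norm s R (trunc_seq f (int N)) \<le> real (N div q ^ k + 1) * ((2 + 2 ^ s) * x powr lam * B powr lam)" .
  then show ?thesis
    using gowers_norm_eq_box_norm[of N R s f] \<open>pN > 0\<close> \<open>N \<ge> 1\<close> unfolding pN_def lam_def R_def B_def x_def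
    by (simp add: divide_right_mono powr_divide mult_ac)
qed

lemma block_count_le:
  fixes eta :: real
  assumes "eta > 0" "real N \<le> real M / eta" "M < q ^ (k + 1)"
  shows "real (N div q ^ k + 1) \<le> real q / eta + 1"
proof -
  have "real M \<le> real q * real (q ^ k)"
    using assms(3) by (simp only: of_nat_mult[symmetric] of_nat_le_iff power_Suc[symmetric] Suc_eq_plus1)
  then have "eta * real N \<le> real q * real (q ^ k)"
    using assms(1,2) by (simp add: field_simps)
  moreover have "q > 0"
    using assms(3) by (cases q) auto
  ultimately have "real N / real (q ^ k) \<le> real q / eta"
    using assms(1) by (simp add: field_simps)
  moreover have "real (N div q ^ k) \<le> real N / real (q ^ k)"
    by (rule of_nat_div_le_of_nat)
  ultimately show ?thesis
    by simp
qed

theorem gowers_norm_le_powr_gowers_norm: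
  fixes f :: "nat \<Rightarrow> complex" and q s N M :: nat and eta :: real
  assumes "s \<ge> 2" "q \<ge> 2" and qm: "q_multiplicative q f" and f: "\<And>n. cmod (f n) = 1"
    and "N \<ge> 1" "M \<ge> 1" "eta > 0" "eta * real M < real N" "real N \<le> real M / eta"
  shows "gowers_norm s N f \<le> (real q / eta + 1) * (2 * real (Suc s) / eta) ^ Suc s * (2 + 2 ^ s)
    * gowers_norm s M f powr (1 / 2 ^ s)"
proof -
  define D where "D = (2 * real (Suc s) / eta) ^ Suc s"
  define ratio where "ratio = 2 ^ s * real M ^ Suc s / real (card (gowers_Pi s N))"
  obtain k where k: "q ^ k \<le> M" "M < q ^ (k + 1)"
    using ex_power_ivl1[OF \<open>q \<ge> 2\<close> \<open>M \<ge> 1\<close>] by blast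
  have "eta * (eta * real M) < eta * real N"
    using assms(7,8) by simp
  also have "\<dots> \<le> 1 * real M"
    using assms(7,9) by (simp add: field_simps)
  finally have "eta * (eta * real M) < 1 * real M" .
  then have "eta < 1"
    using \<open>M \<ge> 1\<close> \<open>eta > 0\<close> mult_mono[of 1 eta 1 eta] by (cases "eta < 1") auto
  then have D: "1 \<le> D"
    unfolding D_def using \<open>eta > 0\<close> by (intro one_le_power) (simp add: field_simps)
  moreover have "ratio \<le> D"
    unfolding ratio_def D_def using assms by (intro parallelepiped_count_ratio_le) auto
  ultimately have "ratio powr (1 / 2 ^ s) \<le> D"
    using powr_mono2[of "1 / 2 ^ s" ratio D] powr_mono[of "1 / 2 ^ s" 1 D] by (simp add: ratio_def)
  with block_count_le[OF \<open>eta > 0\<close> \<open>real N \<le> real M / eta\<close> k(2)]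
  have "real (N div q ^ k + 1) * (2 + 2 ^ s) * ratio powr (1 / 2 ^ s) * gowers_norm s M f powr (1 / 2 ^ s)
      \<le> (real q / eta + 1) * (2 + 2 ^ s) * D * gowers_norm s M f powr (1 / 2 ^ s)"
    using \<open>eta > 0\<close> D by (intro mult_mono) auto
  with gowers_norm_le_block_count_powr[OF \<open>s \<ge> 2\<close> _ qm f \<open>N \<ge> 1\<close> \<open>M \<ge> 1\<close> k(1)] \<open>q \<ge> 2\<close>
  show ?thesis
    unfolding ratio_def D_def by (simp add: mult_ac)
qed

theorem lemma2p2:
  fixes q s :: nat
  assumes "q \<ge> 2" and "s \<ge> 2"
  shows "\<exists>lam::real. lam > 0 \<and>
    (\<forall>eta::real. eta > 0 \<longrightarrow> (\<exists>C::real. C > 0 \<and>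
      (\<forall>(f :: nat \<Rightarrow> complex) (N::nat) (M::nat).
         q_multiplicative q f \<longrightarrow> (\<forall>n. cmod (f n) = 1) \<longrightarrow>
         N \<ge> 1 \<longrightarrow> M \<ge> 1 \<longrightarrow> eta * real M < real N \<longrightarrow> real N \<le> real M / eta \<longrightarrow>
         gowers_norm s N f \<le> C * gowers_norm s M f powr lam)))"
proof -
  define C where "C eta = (real q / eta + 1) * (2 * real (Suc s) / eta) ^ Suc s * (2 + 2 ^ s)" for eta :: real
  have "C eta > 0" if "eta > 0" for eta
    unfolding C_def using that by (intro mult_pos_pos zero_less_power) (auto intro: add_nonneg_pos)
  moreover have "gowers_norm s N f \<le> C eta * gowers_norm s M f powr (1 / 2 ^ s)"
    if "eta > 0" "q_multiplicative q f" "\<forall>n. cmod (f n) = 1" "N \<ge> 1" "M \<ge> 1"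
      "eta * real M < real N" "real N \<le> real M / eta" for eta f N M
    unfolding C_def using that assms by (intro gowers_norm_le_powr_gowers_norm) auto
  ultimately show ?thesis
    by (intro exI[of _ "1 / 2 ^ s"] conjI) (simp, blast)
qed

end
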